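(* In the Setting below, for all $u,v,w,t\in V$: $$w\langle u,v\rangle+u\langle v,w\rangle+v\langle w,u\rangle=0,$$ $$\langle w,t\rangle\langle u,v\rangle+\langle u,t\rangle\langle v,w\rangle+\langle v,t\rangle\langle w,u\rangle=0,$$ where in the first identity elements of $U$ act on $V$ on the right, and in the second the products are taken in $U$.
   Context: Setting. Let $\mathbb F$ be a field of characteristic different from $2$ and $3$. A Malcev algebra is an anticommutative algebra $\mathcal M$ over $\mathbb F$ satisfying $(xz)(yt)=((xy)z)t+((yz)t)x+((zt)x)y+((tx)y)z$. Products are left-normed: $xyz=(xy)z$, $xyzt=((xy)z)t$. Put $J(x,y,z)=xyz+yzx+zxy$ (the Jacobian), $\{x,y,z\}=xyz-xzy+2x(yz)$, and $h(y,z,t,x,u)=\{yz,t,u\}x+\{yz,t,x\}u+\{yx,z,u\}t+\{yu,z,x\}t$. The variety $\mathcal H$ consists of the Malcev algebras satisfying $h(y,z,t,x,u)=0$ identically. The centroid $\Gamma(\mathcal M)$ is the set of linear maps $\alpha$ of $\mathcal M$ (written on the right) with $(xy)\alpha=x(y\alpha)=(x\alpha)y$ for all $x,y$. Put $p(x,y,z,t)=-\{zt,x,y\}-\{yt,z,x\}+\{xt,y,z\}$ and define the operator $\alpha(y,z,t)$ by $x\,\alpha(y,z,t)=p(x,y,z,t)$; for $\mathcal M\in\mathcal H$ these operators lie in $\Gamma(\mathcal M)$. Let $L=\mathfrak{sl}_2(\mathbb F)$ with basis $E,H,F$ and products $EH=E$, $FH=-F$, $EF=\tfrac12 H$. Standing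 assumption: $\mathcal M\in\mathcal H$ contains $L$ as a subalgebra and $mL\neq 0$ for every $0\neq m\in\mathcal M$. Define $N_{\mathcal M}=\{m\in\mathcal M: J(m,a,b)=0\ \forall a,b\in L\}$ and $J_{\mathcal M}=\{m\in\mathcal M:\{m,a,b\}=0\ \forall a,b\in L\}$. Known facts: $\mathcal M=N_{\mathcal M}\oplus J_{\mathcal M}$; $J_{\mathcal M}$ is a direct sum of $2$-dimensional $L$-submodules with bases $\{u,v\}$, $uH=u$, $vH=-v$, $uE=v$, $uF=0$, $vE=0$, $vF=-u$; letting $U$ be the linear span of the operators $\alpha(m,a,b)$ ($m\in\mathcal M$, $a,b\in L$), $U$ is a commutative associative subalgebra of $\Gamma(\mathcal M)$ and $N_{\mathcal M}=\sum_{\alpha\in U}L\alpha\cong L\otimes U$. Let $V=\{w\in J_{\mathcal M}: wH=w\}$, and for $w\in V$ put $w(1)=w$, $w(2)=wE$. There is a skew-symmetric bilinear map $\langle\cdot,\cdot\rangle:V\times V\to U$ with $u(1)v(1)=F\langle u,v\rangle$, $u(1)v(2)=u(2)v(1)=\tfrac12 H\langle u,v\rangle$, $u(2)v(2)=E\langle u,v\rangle$ for all $u,v\in V$. *)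

theory Defs
  imports Main "HOL.Vector_Spaces"
begin

text \<open>Products are left-normed and
operators (elements of the centroid) act on the right, i.e. x alpha = alpha x.\<close>

definition bilinear_prod :: "('k::field \<Rightarrow> 'm::ab_group_add \<Rightarrow> 'm) \<Rightarrow> ('m \<Rightarrow> 'm \<Rightarrow> 'm) \<Rightarrow> bool" where
  "bilinear_prod scale mul \<longleftrightarrow>
     (\<forall>x. Vector_Spaces.linear scale scale (mul x)) \<and>
     (\<forall>y. Vector_Spaces.linear scale scale (\<lambda>x. mul x y))"

definition malcev :: "('k::field \<Rightarrow> 'm::ab_group_add \<Rightarrow> 'm) \<Rightarrow> ('m \<Rightarrow> 'm \<Rightarrow> 'm) \<Rightarrow> bool" where
  "malcev scale mul \<longleftrightarrow> vector_space scale \<and> bilinear_prod scale mul \<and>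
     (\<forall>x y. mul x y = - mul y x) \<and>
     (\<forall>x y z t. mul (mul x z) (mul y t) =
        mul (mul (mul x y) z) t + mul (mul (mul y z) t) x +
        mul (mul (mul z t) x) y + mul (mul (mul t x) y) z)"

definition jacobian :: "('m::ab_group_add \<Rightarrow> 'm \<Rightarrow> 'm) \<Rightarrow> 'm \<Rightarrow> 'm \<Rightarrow> 'm \<Rightarrow> 'm" where
  "jacobian mul x y z = mul (mul x y) z + mul (mul y z) x + mul (mul z x) y"

definition trip :: "('k::field \<Rightarrow> 'm::ab_group_add \<Rightarrow> 'm) \<Rightarrow> ('m \<Rightarrow> 'm \<Rightarrow> 'm) \<Rightarrow> 'm \<Rightarrow> 'm \<Rightarrow> 'm \<Rightarrow> 'm" where
  "trip scale mul x y z = mul (mul x y) z - mul (mul x z) y + scale 2 (mul x (mul y z))"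

definition hpoly :: "('k::field \<Rightarrow> 'm::ab_group_add \<Rightarrow> 'm) \<Rightarrow> ('m \<Rightarrow> 'm \<Rightarrow> 'm) \<Rightarrow> 'm \<Rightarrow> 'm \<Rightarrow> 'm \<Rightarrow> 'm \<Rightarrow> 'm \<Rightarrow> 'm" where
  "hpoly scale mul y z t x u =
     mul (trip scale mul (mul y z) t u) x + mul (trip scale mul (mul y z) t x) u +
     mul (trip scale mul (mul y x) z u) t + mul (trip scale mul (mul y u) z x) t"

definition in_H :: "('k::field \<Rightarrow> 'm::ab_group_add \<Rightarrow> 'm) \<Rightarrow> ('m \<Rightarrow> 'm \<Rightarrow> 'm) \<Rightarrow> bool" where
  "in_H scale mul \<longleftrightarrow> malcev scale mul \<and> (\<forall>y z t x u. hpoly scale mul y z t x u = 0)"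

definition centroid :: "('k::field \<Rightarrow> 'm::ab_group_add \<Rightarrow> 'm) \<Rightarrow> ('m \<Rightarrow> 'm \<Rightarrow> 'm) \<Rightarrow> ('m \<Rightarrow> 'm) set" where
  "centroid scale mul = {\<alpha>. Vector_Spaces.linear scale scale \<alpha> \<and>
      (\<forall>x y. \<alpha> (mul x y) = mul x (\<alpha> y) \<and> \<alpha> (mul x y) = mul (\<alpha> x) y)}"

definition pfun :: "('k::field \<Rightarrow> 'm::ab_group_add \<Rightarrow> 'm) \<Rightarrow> ('m \<Rightarrow> 'm \<Rightarrow> 'm) \<Rightarrow> 'm \<Rightarrow> 'm \<Rightarrow> 'm \<Rightarrow> 'm \<Rightarrow> 'm" where
  "pfun scale mul x y z t =
     - trip scale mul (mul z t) x y - trip scale mul (mul y t) z x + trip scale mul (mul x t) y z"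

definition alpha_op :: "('k::field \<Rightarrow> 'm::ab_group_add \<Rightarrow> 'm) \<Rightarrow> ('m \<Rightarrow> 'm \<Rightarrow> 'm) \<Rightarrow> 'm \<Rightarrow> 'm \<Rightarrow> 'm \<Rightarrow> ('m \<Rightarrow> 'm)" where
  "alpha_op scale mul y z t = (\<lambda>x. pfun scale mul x y z t)"

definition Uspan :: "('k::field \<Rightarrow> 'm::ab_group_add \<Rightarrow> 'm) \<Rightarrow> ('m \<Rightarrow> 'm \<Rightarrow> 'm) \<Rightarrow> 'm set \<Rightarrow> ('m \<Rightarrow> 'm) set" where
  "Uspan scale mul L = {f. \<exists>(n::nat) c ms as bs. (\<forall>i<n. as i \<in> L \<and> bs i \<in> L) \<and>
      f = (\<lambda>x. \<Sum>i<n. scale (c i) (alpha_op scale mul (ms i) (as i) (bs i) x))}"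

definition N_M :: "('m::ab_group_add \<Rightarrow> 'm \<Rightarrow> 'm) \<Rightarrow> 'm set \<Rightarrow> 'm set" where
  "N_M mul L = {m. \<forall>a\<in>L. \<forall>b\<in>L. jacobian mul m a b = 0}"

definition J_M :: "('k::field \<Rightarrow> 'm::ab_group_add \<Rightarrow> 'm) \<Rightarrow> ('m \<Rightarrow> 'm \<Rightarrow> 'm) \<Rightarrow> 'm set \<Rightarrow> 'm set" where
  "J_M scale mul L = {m. \<forall>a\<in>L. \<forall>b\<in>L. trip scale mul m a b = 0}"

definition Vset :: "('k::field \<Rightarrow> 'm::ab_group_add \<Rightarrow> 'm) \<Rightarrow> ('m \<Rightarrow> 'm \<Rightarrow> 'm) \<Rightarrow> 'm set \<Rightarrow> 'm \<Rightarrow> 'm set" where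
  "Vset scale mul L H = {w \<in> J_M scale mul L. mul w H = w}"

end

theory Submission
  imports Defs
begin

text \<open>In every algebra of the variety H, the operator alpha(y,z,t) commutes with left
multiplications: alpha(y,z,t)(xu) - x(alpha(y,z,t)u) is a fixed linear combination of instances of
h and of the Malcev identity, which is verified by normalising anticommutative polynomials.
By anticommutativity alpha(y,z,t), and hence all of U, then lies in the centroid.

For u, v, w in V, the Malcev identity for (u, w, v, E) and the multiplication table
of the bracket give <u,w>v = (<v,w>u + <u,w>v + <u,v>w)/2, which by skew-symmetry is the first
identity. The left-hand side beta of the second identity lies in the centroid, and
F beta = (w<u,v> + u<v,w> + v<w,u>) t = 0 by the first identity. A centroid element vanishing at F
also vanishes at H = 2 EF and at E = EH, hence on L; since mL = 0 forces m = 0, it is zero.\<close>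

section \<open>Malcev algebras and their centroid\<close>

locale malcev_algebra =
  fixes scale :: "'k::field \<Rightarrow> 'm::ab_group_add \<Rightarrow> 'm"
    and mul :: "'m \<Rightarrow> 'm \<Rightarrow> 'm"
  assumes malcev: "malcev scale mul"
begin

sublocale vector_space scale
  using malcev unfolding malcev_def by blast

lemma module_hom_mul_right: "module_hom scale scale (mul x)"
  using malcev unfolding malcev_def bilinear_prod_def module_hom_iff_linear by blast

lemma module_hom_mul_left: "module_hom scale scale (\<lambda>y. mul y x)"
  using malcev unfolding malcev_def bilinear_prod_def module_hom_iff_linear by blast

lemmas mul_add_right = module_hom.add[OF module_hom_mul_right]
  and mul_add_left = module_hom.add[OF module_hom_mul_left]
  and mul_scale_right = module_hom.scale[OF module_hom_mul_right]
  and mul_scale_left = module_hom.scale[OF module_hom_mul_left]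
  and mul_zero_right = module_hom.zero[OF module_hom_mul_right]
  and mul_zero_left = module_hom.zero[OF module_hom_mul_left]
  and mul_minus_right = module_hom.neg[OF module_hom_mul_right]
  and mul_minus_left = module_hom.neg[OF module_hom_mul_left]
  and mul_diff_right = module_hom.diff[OF module_hom_mul_right]
  and mul_diff_left = module_hom.diff[OF module_hom_mul_left]
  and mul_sum_right = module_hom.sum[OF module_hom_mul_right]

lemmas mul_bilinear = mul_add_right mul_add_left mul_scale_right mul_scale_left
  mul_zero_right mul_zero_left mul_minus_right mul_minus_left mul_diff_right mul_diff_left

lemma mul_anticommute: "mul x y = - mul y x"
  using malcev unfolding malcev_def by blast

lemma malcev_identity:
  "mul (mul x z) (mul y t) =
     mul (mul (mul x y) z) t + mul (mul (mul y z) t) x + mul (mul (mul z t) x) y + mul (mul (mul t x) y) z"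
  using malcev unfolding malcev_def by blast

lemma centroid_module_hom: "f \<in> centroid scale mul \<Longrightarrow> module_hom scale scale f"
  by (simp add: centroid_def module_hom_iff_linear)

lemma centroid_mul_right: "f \<in> centroid scale mul \<Longrightarrow> f (mul x y) = mul x (f y)"
  by (simp add: centroid_def)

lemma centroid_mul_left: "f \<in> centroid scale mul \<Longrightarrow> f (mul x y) = mul (f x) y"
  unfolding centroid_def by blast

lemma centroidI:
  assumes "module_hom scale scale f" and "\<And>x y. f (mul x y) = mul x (f y)"
  shows "f \<in> centroid scale mul"
proof -
  have "f (mul x y) = mul (f x) y" for x y
    using assms(2)[of y x] module_hom.neg[OF assms(1)] by (metis mul_anticommute)
  with assms show ?thesis
    by (simp add: centroid_def module_hom_iff_linear)
qed

lemma centroid_sum: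
  assumes "\<And>i. i \<in> I \<Longrightarrow> f i \<in> centroid scale mul"
  shows "(\<lambda>x. \<Sum>i\<in>I. f i x) \<in> centroid scale mul"
proof (rule centroidI)
  note hom = centroid_module_hom[OF assms]
  show "module_hom scale scale (\<lambda>x. \<Sum>i\<in>I. f i x)"
    by (simp add: module_hom_iff module_axioms module_hom.add[OF hom] module_hom.scale[OF hom]
        sum.distrib scale_sum_right cong: sum.cong)
  show "(\<Sum>i\<in>I. f i (mul x y)) = mul x (\<Sum>i\<in>I. f i y)" for x y
    by (simp add: mul_sum_right centroid_mul_right[OF assms] cong: sum.cong)
qed

lemma centroid_scale: "f \<in> centroid scale mul \<Longrightarrow> (\<lambda>x. scale c (f x)) \<in> centroid scale mul"
  by (intro centroidI)
    (simp_all add: module_hom_iff module_axioms module_hom.add[OF centroid_module_hom]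
      module_hom.scale[OF centroid_module_hom] scale_right_distrib scale_left_commute
      centroid_mul_right mul_scale_right)

lemma centroid_add:
  "f \<in> centroid scale mul \<Longrightarrow> g \<in> centroid scale mul \<Longrightarrow> (\<lambda>x. f x + g x) \<in> centroid scale mul"
  by (intro centroidI)
    (simp_all add: module_hom_iff module_axioms module_hom.add[OF centroid_module_hom]
      module_hom.scale[OF centroid_module_hom] scale_right_distrib centroid_mul_right mul_add_right
      algebra_simps)

lemma centroid_comp:
  "f \<in> centroid scale mul \<Longrightarrow> g \<in> centroid scale mul \<Longrightarrow> (\<lambda>x. f (g x)) \<in> centroid scale mul"
  by (intro centroidI)
    (simp_all add: module_hom_iff module_axioms module_hom.add[OF centroid_module_hom]
      module_hom.scale[OF centroid_module_hom] centroid_mul_right)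

lemma module_hom_alpha_op: "module_hom scale scale (alpha_op scale mul y z t)"
  by (simp add: module_hom_iff module_axioms alpha_op_def pfun_def trip_def mul_bilinear
      scale_right_distrib scale_right_diff_distrib scale_left_commute algebra_simps)

end

section \<open>Anticommutative polynomials\<close>

text \<open>A monomial is a binary tree over variable indices. Products of monomials are oriented by
a total order on trees, at the cost of a sign, so that an expression is shown to vanish in every
anticommutative algebra once all coefficients of its oriented monomials cancel.\<close>

datatype ntree = Leaf nat | Node ntree ntree

datatype nexpr = NVar nat | NZero | NAdd nexpr nexpr | NNeg nexpr | NSub nexpr nexpr
  | NDbl nexpr | NMul nexpr nexpr

fun ntree_less :: "ntree \<Rightarrow> ntree \<Rightarrow> bool" where
  "ntree_less (Leaf i) (Leaf j) \<longleftrightarrow> i < j"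
| "ntree_less (Leaf _) (Node _ _) \<longleftrightarrow> True"
| "ntree_less (Node _ _) (Leaf _) \<longleftrightarrow> False"
| "ntree_less (Node a b) (Node c d) \<longleftrightarrow> ntree_less a c \<or> a = c \<and> ntree_less b d"

definition oriented_node :: "ntree \<Rightarrow> ntree \<Rightarrow> int \<times> ntree" where
  "oriented_node a b = (if ntree_less b a then (- 1, Node b a) else (1, Node a b))"

fun monomials :: "nexpr \<Rightarrow> (int \<times> ntree) list" where
  "monomials (NVar i) = [(1, Leaf i)]"
| "monomials NZero = []"
| "monomials (NAdd a b) = monomials a @ monomials b"
| "monomials (NNeg a) = [(- c, s). (c, s) \<leftarrow> monomials a]"
| "monomials (NSub a b) = monomials a @ [(- c, s). (c, s) \<leftarrow> monomials b]"
| "monomials (NDbl a) = [(2 * c, s). (c, s) \<leftarrow> monomials a]"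
| "monomials (NMul a b) =
     [(c * d * fst (oriented_node s r), snd (oriented_node s r)). (c, s) \<leftarrow> monomials a, (d, r) \<leftarrow> monomials b]"

fun add_monomial :: "int \<times> ntree \<Rightarrow> (int \<times> ntree) list \<Rightarrow> (int \<times> ntree) list" where
  "add_monomial p [] = [p]"
| "add_monomial (c, s) ((d, r) # ps) =
     (if s = r then (c + d, r) # ps else (d, r) # add_monomial (c, s) ps)"

definition vanishes :: "nexpr \<Rightarrow> bool" where
  "vanishes e \<longleftrightarrow> list_all (\<lambda>(c, _). c = 0) (foldr add_monomial (monomials e) [])"

definition trip_nexpr :: "nexpr \<Rightarrow> nexpr \<Rightarrow> nexpr \<Rightarrow> nexpr" where
  "trip_nexpr a b c = NAdd (NSub (NMul (NMul a b) c) (NMul (NMul a c) b)) (NDbl (NMul a (NMul b c)))"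

definition pfun_nexpr :: "nexpr \<Rightarrow> nexpr \<Rightarrow> nexpr \<Rightarrow> nexpr \<Rightarrow> nexpr" where
  "pfun_nexpr x y z t =
     NAdd (NSub (NNeg (trip_nexpr (NMul z t) x y)) (trip_nexpr (NMul y t) z x)) (trip_nexpr (NMul x t) y z)"

definition hpoly_nexpr :: "nexpr \<Rightarrow> nexpr \<Rightarrow> nexpr \<Rightarrow> nexpr \<Rightarrow> nexpr \<Rightarrow> nexpr" where
  "hpoly_nexpr y z t x u =
     NAdd (NAdd (NAdd (NMul (trip_nexpr (NMul y z) t u) x) (NMul (trip_nexpr (NMul y z) t x) u))
       (NMul (trip_nexpr (NMul y x) z u) t)) (NMul (trip_nexpr (NMul y u) z x) t)"

definition malcev_nexpr :: "nexpr \<Rightarrow> nexpr \<Rightarrow> nexpr \<Rightarrow> nexpr \<Rightarrow> nexpr" where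
  "malcev_nexpr x y z t =
     NSub (NMul (NMul x z) (NMul y t))
       (NAdd (NAdd (NAdd (NMul (NMul (NMul x y) z) t) (NMul (NMul (NMul y z) t) x))
         (NMul (NMul (NMul z t) x) y)) (NMul (NMul (NMul t x) y) z))"

context malcev_algebra
begin

fun eval_ntree :: "'m list \<Rightarrow> ntree \<Rightarrow> 'm" where
  "eval_ntree vs (Leaf i) = vs ! i"
| "eval_ntree vs (Node a b) = mul (eval_ntree vs a) (eval_ntree vs b)"

fun eval_nexpr :: "'m list \<Rightarrow> nexpr \<Rightarrow> 'm" where
  "eval_nexpr vs (NVar i) = vs ! i"
| "eval_nexpr vs NZero = 0"
| "eval_nexpr vs (NAdd a b) = eval_nexpr vs a + eval_nexpr vs b"
| "eval_nexpr vs (NNeg a) = - eval_nexpr vs a"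
| "eval_nexpr vs (NSub a b) = eval_nexpr vs a - eval_nexpr vs b"
| "eval_nexpr vs (NDbl a) = scale 2 (eval_nexpr vs a)"
| "eval_nexpr vs (NMul a b) = mul (eval_nexpr vs a) (eval_nexpr vs b)"

definition eval_monomials :: "'m list \<Rightarrow> (int \<times> ntree) list \<Rightarrow> 'm" where
  "eval_monomials vs ps = (\<Sum>(c, s)\<leftarrow>ps. scale (of_int c) (eval_ntree vs s))"

lemma eval_monomials_Nil [simp]: "eval_monomials vs [] = 0"
  and eval_monomials_Cons [simp]:
    "eval_monomials vs (p # ps) = scale (of_int (fst p)) (eval_ntree vs (snd p)) + eval_monomials vs ps"
  and eval_monomials_append [simp]:
    "eval_monomials vs (ps @ qs) = eval_monomials vs ps + eval_monomials vs qs"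
  by (simp_all add: eval_monomials_def split_beta)

lemma eval_monomials_scale:
  "eval_monomials vs [(k * c, s). (c, s) \<leftarrow> ps] = scale (of_int k) (eval_monomials vs ps)"
  by (induction ps) (auto simp: scale_right_distrib)

lemma eval_oriented_node:
  "scale (of_int (fst (oriented_node a b))) (eval_ntree vs (snd (oriented_node a b)))
     = mul (eval_ntree vs a) (eval_ntree vs b)"
  by (simp add: oriented_node_def flip: mul_anticommute)

lemma eval_monomials_mul:
  "eval_monomials vs [(c * d * fst (oriented_node s r), snd (oriented_node s r)). (c, s) \<leftarrow> ps, (d, r) \<leftarrow> qs]
     = mul (eval_monomials vs ps) (eval_monomials vs qs)"
proof (induction ps)
  case (Cons p ps)
  have "eval_monomials vs [(c * d * fst (oriented_node s r), snd (oriented_node s r)). (d, r) \<leftarrow> qs]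
      = mul (scale (of_int c) (eval_ntree vs s)) (eval_monomials vs qs)" for c s
    by (induction qs)
      (auto simp: mul_bilinear eval_oriented_node scale_right_distrib scale_left_commute
        simp flip: scale_scale)
  with Cons show ?case
    by (cases p) (simp add: mul_bilinear)
qed (simp add: mul_bilinear)

lemma eval_monomials_monomials: "eval_monomials vs (monomials e) = eval_nexpr vs e"
  using eval_monomials_scale[of vs "- 1"] eval_monomials_scale[of vs 2]
  by (induction e) (simp_all add: eval_monomials_mul)

lemma eval_add_monomial: "eval_monomials vs (add_monomial p ps) = eval_monomials vs (p # ps)"
  by (induction p ps rule: add_monomial.induct) (auto simp: scale_left_distrib algebra_simps)

lemma vanishes_imp_eval_eq_0:
  assumes "vanishes e"
  shows "eval_nexpr vs e = 0"
proof -
  have "eval_monomials vs (foldr add_monomial ps []) = eval_monomials vs ps" for ps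
    by (induction ps) (simp_all add: eval_add_monomial)
  moreover have "list_all (\<lambda>(c, _). c = 0) ps \<Longrightarrow> eval_monomials vs ps = 0" for ps
    by (induction ps) auto
  ultimately show ?thesis
    using assms unfolding vanishes_def by (metis eval_monomials_monomials)
qed

lemma eval_trip_nexpr:
  "eval_nexpr vs (trip_nexpr a b c) = trip scale mul (eval_nexpr vs a) (eval_nexpr vs b) (eval_nexpr vs c)"
  by (simp add: trip_nexpr_def trip_def)

lemma eval_pfun_nexpr:
  "eval_nexpr vs (pfun_nexpr a b c d)
     = pfun scale mul (eval_nexpr vs a) (eval_nexpr vs b) (eval_nexpr vs c) (eval_nexpr vs d)"
  by (simp add: pfun_nexpr_def pfun_def eval_trip_nexpr)

lemma eval_hpoly_nexpr:
  "eval_nexpr vs (hpoly_nexpr a b c d e)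
     = hpoly scale mul (eval_nexpr vs a) (eval_nexpr vs b) (eval_nexpr vs c) (eval_nexpr vs d) (eval_nexpr vs e)"
  by (simp add: hpoly_nexpr_def hpoly_def eval_trip_nexpr)

lemma eval_malcev_nexpr: "eval_nexpr vs (malcev_nexpr a b c d) = 0"
  by (simp add: malcev_nexpr_def malcev_identity)

end

section \<open>The centroid of an algebra in H\<close>

locale malcev_H = malcev_algebra +
  assumes h_identity: "hpoly scale mul y z t x u = 0"

text \<open>Variables 0, 1, 2, 3, 4 stand for x, u, y, z, t in the statement of
\<open>alpha_op_mul_left\<close>; each summand is an instance of h or of the Malcev identity, possibly
doubled, negated or multiplied by a variable.\<close>

definition alpha_mul_left_certificate :: "nexpr list" where
  "alpha_mul_left_certificate =
    [NNeg (hpoly_nexpr (NVar 3) (NVar 1) (NVar 0) (NVar 2) (NVar 4)),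
     hpoly_nexpr (NVar 2) (NVar 1) (NVar 0) (NVar 3) (NVar 4),
     hpoly_nexpr (NVar 1) (NVar 2) (NVar 3) (NVar 0) (NVar 4),
     NNeg (NDbl (hpoly_nexpr (NVar 1) (NVar 3) (NVar 0) (NVar 2) (NVar 4))),
     NNeg (hpoly_nexpr (NVar 2) (NVar 3) (NVar 0) (NVar 1) (NVar 4)),
     hpoly_nexpr (NVar 2) (NVar 0) (NVar 4) (NVar 1) (NVar 3),
     hpoly_nexpr (NVar 2) (NVar 0) (NVar 1) (NVar 3) (NVar 4),
     hpoly_nexpr (NVar 0) (NVar 3) (NVar 1) (NVar 2) (NVar 4),
     NNeg (NDbl (hpoly_nexpr (NVar 0) (NVar 2) (NVar 3) (NVar 1) (NVar 4))),
     NNeg (hpoly_nexpr (NVar 0) (NVar 1) (NVar 3) (NVar 2) (NVar 4)),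
     hpoly_nexpr (NVar 0) (NVar 2) (NVar 1) (NVar 3) (NVar 4),
     hpoly_nexpr (NVar 1) (NVar 0) (NVar 3) (NVar 2) (NVar 4),
     NNeg (hpoly_nexpr (NVar 0) (NVar 1) (NVar 4) (NVar 2) (NVar 3)),
     hpoly_nexpr (NVar 1) (NVar 0) (NVar 2) (NVar 3) (NVar 4),
     hpoly_nexpr (NVar 1) (NVar 2) (NVar 0) (NVar 3) (NVar 4),
     NDbl (hpoly_nexpr (NVar 1) (NVar 0) (NVar 4) (NVar 2) (NVar 3)),
     malcev_nexpr (NMul (NVar 0) (NVar 3)) (NVar 1) (NVar 2) (NVar 4),
     malcev_nexpr (NMul (NVar 0) (NVar 2)) (NVar 1) (NVar 4) (NVar 3),
     NNeg (NDbl (malcev_nexpr (NMul (NVar 2) (NVar 3)) (NVar 0) (NVar 1) (NVar 4))),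
     NNeg (NMul (malcev_nexpr (NVar 0) (NVar 2) (NVar 3) (NVar 4)) (NVar 1)),
     NNeg (NMul (malcev_nexpr (NVar 0) (NVar 2) (NVar 4) (NVar 3)) (NVar 1)),
     NNeg (malcev_nexpr (NVar 1) (NMul (NVar 0) (NVar 3)) (NVar 2) (NVar 4)),
     NMul (malcev_nexpr (NVar 0) (NVar 3) (NVar 2) (NVar 4)) (NVar 1),
     NNeg (malcev_nexpr (NMul (NVar 1) (NVar 4)) (NVar 0) (NVar 2) (NVar 3)),
     NNeg (malcev_nexpr (NVar 2) (NMul (NVar 0) (NVar 1)) (NVar 3) (NVar 4)),
     NNeg (malcev_nexpr (NVar 1) (NMul (NVar 0) (NVar 3)) (NVar 4) (NVar 2)),
     NNeg (malcev_nexpr (NMul (NVar 0) (NVar 1)) (NVar 2) (NVar 4) (NVar 3)),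
     NNeg (malcev_nexpr (NVar 1) (NMul (NVar 0) (NVar 4)) (NVar 2) (NVar 3)),
     NDbl (NMul (malcev_nexpr (NVar 0) (NVar 1) (NVar 2) (NVar 3)) (NVar 4)),
     NDbl (malcev_nexpr (NMul (NVar 1) (NVar 2)) (NVar 0) (NVar 4) (NVar 3)),
     NNeg (NDbl (NMul (malcev_nexpr (NVar 0) (NVar 1) (NVar 3) (NVar 2)) (NVar 4))),
     malcev_nexpr (NMul (NVar 1) (NVar 2)) (NVar 0) (NVar 3) (NVar 4),
     malcev_nexpr (NVar 0) (NMul (NVar 1) (NVar 2)) (NVar 3) (NVar 4),
     NNeg (malcev_nexpr (NMul (NVar 1) (NVar 3)) (NVar 0) (NVar 4) (NVar 2)),
     malcev_nexpr (NVar 0) (NMul (NVar 1) (NVar 2)) (NVar 4) (NVar 3),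
     NNeg (malcev_nexpr (NVar 0) (NMul (NVar 1) (NVar 3)) (NVar 4) (NVar 2)),
     NNeg (malcev_nexpr (NVar 0) (NMul (NVar 1) (NVar 3)) (NVar 2) (NVar 4)),
     NDbl (malcev_nexpr (NVar 0) (NMul (NVar 2) (NVar 3)) (NVar 1) (NVar 4)),
     NNeg (NMul (malcev_nexpr (NVar 1) (NVar 2) (NVar 3) (NVar 4)) (NVar 0)),
     NNeg (NMul (malcev_nexpr (NVar 1) (NVar 2) (NVar 4) (NVar 3)) (NVar 0)),
     NMul (malcev_nexpr (NVar 1) (NVar 3) (NVar 2) (NVar 4)) (NVar 0),
     NNeg (malcev_nexpr (NVar 0) (NMul (NVar 1) (NVar 4)) (NVar 3) (NVar 2)),
     NNeg (malcev_nexpr (NVar 0) (NMul (NVar 1) (NVar 4)) (NVar 2) (NVar 3)),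
     malcev_nexpr (NVar 1) (NMul (NVar 0) (NVar 2)) (NVar 3) (NVar 4),
     malcev_nexpr (NVar 1) (NMul (NVar 0) (NVar 2)) (NVar 4) (NVar 3),
     malcev_nexpr (NMul (NVar 0) (NVar 4)) (NVar 1) (NVar 3) (NVar 2),
     malcev_nexpr (NVar 1) (NMul (NVar 0) (NVar 4)) (NVar 3) (NVar 2),
     NNeg (NDbl (malcev_nexpr (NVar 0) (NVar 2) (NMul (NVar 1) (NVar 4)) (NVar 3))),
     NNeg (NDbl (malcev_nexpr (NMul (NVar 0) (NVar 1)) (NVar 2) (NVar 3) (NVar 4))),
     NNeg (NDbl (malcev_nexpr (NVar 2) (NVar 3) (NMul (NVar 0) (NVar 1)) (NVar 4)))]"

lemma vanishes_alpha_mul_left: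
  "vanishes
     (NSub (NSub (pfun_nexpr (NMul (NVar 0) (NVar 1)) (NVar 2) (NVar 3) (NVar 4))
                 (NMul (NVar 0) (pfun_nexpr (NVar 1) (NVar 2) (NVar 3) (NVar 4))))
       (foldr NAdd alpha_mul_left_certificate NZero))"
  by code_simp

context malcev_H
begin

lemma alpha_op_mul_left: "alpha_op scale mul y z t (mul x u) = mul x (alpha_op scale mul y z t u)"
proof -
  let ?vs = "[x, u, y, z, t]"
  have "eval_nexpr ?vs (foldr NAdd alpha_mul_left_certificate NZero) = 0"
    by (simp add: alpha_mul_left_certificate_def eval_hpoly_nexpr eval_malcev_nexpr h_identity mul_bilinear)
  with vanishes_imp_eval_eq_0[OF vanishes_alpha_mul_left, of ?vs] show ?thesis
    by (simp add: alpha_op_def eval_pfun_nexpr)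
qed

lemma alpha_op_in_centroid: "alpha_op scale mul y z t \<in> centroid scale mul"
  by (rule centroidI[OF module_hom_alpha_op alpha_op_mul_left])

lemma Uspan_subset_centroid: "Uspan scale mul L \<subseteq> centroid scale mul"
  unfolding Uspan_def by (auto intro!: centroid_sum centroid_scale alpha_op_in_centroid)

end

section \<open>Modules over sl2 and the bracket on V\<close>

abbreviation sl2_V ::
    "('k::field \<Rightarrow> 'm::ab_group_add \<Rightarrow> 'm) \<Rightarrow> ('m \<Rightarrow> 'm \<Rightarrow> 'm) \<Rightarrow> 'm \<Rightarrow> 'm \<Rightarrow> 'm \<Rightarrow> 'm set"
  where "sl2_V scale mul E H F \<equiv> Vset scale mul (module.span scale {E, H, F}) H"

locale malcev_sl2 = malcev_algebra scale mul
  for scale :: "'k::field \<Rightarrow> 'm::ab_group_add \<Rightarrow> 'm" and mul :: "'m \<Rightarrow> 'm \<Rightarrow> 'm" +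
  fixes E H F :: 'm
  assumes mul_E_H: "mul E H = E" and mul_F_H: "mul F H = - F"
    and mul_E_F: "mul E F = scale (1/2) H"
    and two_neq_zero: "(2::'k) \<noteq> 0" and three_neq_zero: "(3::'k) \<noteq> 0"
begin

abbreviation V :: "'m set" where "V \<equiv> sl2_V scale mul E H F"

lemma scale_two_half [simp]: "scale 2 (scale (1/2) a) = a"
  using two_neq_zero by simp

lemma mul_H_F: "mul H F = F"
  using mul_anticommute[of H F] by (simp add: mul_F_H)

lemma mul_F_E: "mul F E = - scale (1/2) H"
  using mul_anticommute[of F E] by (simp add: mul_E_F)

lemma mul_self: "mul a a = 0"
proof -
  have "scale 2 (mul a a) = mul a a + mul a a"
    by (simp add: scale_left_distrib[of 1 1, simplified])
  also have "\<dots> = 0"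
    using mul_anticommute[of a a] by (simp add: add_eq_0_iff)
  finally show ?thesis
    using two_neq_zero by simp
qed

lemma V_mul_H: "w \<in> V \<Longrightarrow> mul w H = w"
  by (simp add: Vset_def)

lemma V_trip_basis:
  assumes "w \<in> V" and "a \<in> {E, H, F}" and "b \<in> {E, H, F}"
  shows "trip scale mul w a b = 0"
  using assms span_base[of a "{E, H, F}"] span_base[of b "{E, H, F}"]
  by (simp add: Vset_def J_M_def)

lemma V_mul_F:
  assumes w: "w \<in> V"
  shows "mul w F = 0"
proof -
  define x where "x = mul w F"
  have "trip scale mul w H F = 0"
    using V_trip_basis[OF w] by simp
  then have x_H: "mul x H = scale 3 x"
    by (simp add: trip_def V_mul_H[OF w] mul_H_F x_def scale_left_distrib[of 1 2, simplified]
        algebra_simps)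
  have "scale 3 x = scale 9 x"
    using malcev_identity[of w H F H] mul_anticommute[of F w] mul_anticommute[of H w]
    by (simp add: V_mul_H[OF w] mul_F_H mul_self mul_bilinear x_H algebra_simps flip: x_def)
  moreover have "(3::'k) \<noteq> 9"
  proof -
    have "(2 * 3 :: 'k) \<noteq> 0"
      using two_neq_zero three_neq_zero by (rule no_zero_divisors)
    then show ?thesis
      by (simp add: eq_iff_diff_eq_0[of "3::'k"])
  qed
  ultimately show ?thesis
    by (simp add: x_def)
qed

lemma V_mul_E_mul_F:
  assumes w: "w \<in> V"
  shows "mul (mul w E) F = - w"
proof -
  have "trip scale mul w E F = 0"
    using V_trip_basis[OF w] by simp
  then show ?thesis
    by (simp add: trip_def V_mul_F[OF w] mul_E_F mul_bilinear V_mul_H[OF w] two_neq_zero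
        eq_neg_iff_add_eq_0)
qed

lemma centroid_eq_0_if_vanishes_at_F:
  assumes faithful: "\<And>m. m \<noteq> 0 \<Longrightarrow> \<exists>a\<in>span {E, H, F}. mul m a \<noteq> 0"
    and \<beta>: "\<beta> \<in> centroid scale mul" and \<beta>_F: "\<beta> F = 0"
  shows "\<beta> x = 0"
proof (rule ccontr)
  note hom = centroid_module_hom[OF \<beta>]
  have \<beta>_H: "\<beta> H = 0"
    using module_hom.scale[OF hom, of 2 "mul E F"] centroid_mul_right[OF \<beta>, of E F]
    by (simp add: mul_E_F \<beta>_F mul_bilinear two_neq_zero)
  have \<beta>_E: "\<beta> E = 0"
    using centroid_mul_right[OF \<beta>, of E H] by (simp add: mul_E_H \<beta>_H mul_bilinear)
  have \<beta>_span: "\<beta> a = 0" if "a \<in> span {E, H, F}" for a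
    using module_hom.eq_0_on_span[OF hom _ that] \<beta>_E \<beta>_H \<beta>_F by blast
  assume "\<beta> x \<noteq> 0"
  then obtain a where a: "a \<in> span {E, H, F}" and "mul (\<beta> x) a \<noteq> 0"
    using faithful by blast
  moreover have "mul (\<beta> x) a = mul x (\<beta> a)"
    by (metis \<beta> centroid_mul_left centroid_mul_right)
  ultimately show False
    by (simp add: \<beta>_span mul_bilinear)
qed

end

locale malcev_sl2_bracket = malcev_sl2 scale mul E H F
  for scale :: "'k::field \<Rightarrow> 'm::ab_group_add \<Rightarrow> 'm" and mul E H F +
  fixes br :: "'m \<Rightarrow> 'm \<Rightarrow> 'm \<Rightarrow> 'm"
  assumes br_centroid:
      "\<lbrakk>u \<in> sl2_V scale mul E H F; v \<in> sl2_V scale mul E H F\<rbrakk> \<Longrightarrow> br u v \<in> centroid scale mul"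
    and br_skew:
      "\<lbrakk>u \<in> sl2_V scale mul E H F; v \<in> sl2_V scale mul E H F\<rbrakk> \<Longrightarrow> br u v x = - br v u x"
    and mul_eq_br_F:
      "\<lbrakk>u \<in> sl2_V scale mul E H F; v \<in> sl2_V scale mul E H F\<rbrakk> \<Longrightarrow> mul u v = br u v F"
    and mul_mul_E_eq_br_H:
      "\<lbrakk>u \<in> sl2_V scale mul E H F; v \<in> sl2_V scale mul E H F\<rbrakk> \<Longrightarrow> mul u (mul v E) = scale (1/2) (br u v H)"
    and mul_E_mul_eq_br_H:
      "\<lbrakk>u \<in> sl2_V scale mul E H F; v \<in> sl2_V scale mul E H F\<rbrakk> \<Longrightarrow> mul (mul u E) v = scale (1/2) (br u v H)"
begin

lemma br_cyclic:
  assumes u: "u \<in> V" and v: "v \<in> V" and w: "w \<in> V"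
  shows "br u v w + br v w u + br w u v = 0"
proof -
  note centroid_uv = br_centroid[OF u v] and centroid_vw = br_centroid[OF v w]
    and centroid_uw = br_centroid[OF u w]
  have mul_H: "mul H a = - a" if "a \<in> V" for a
    using mul_anticommute[of H a] V_mul_H[OF that] by simp
  have "mul (mul u w) (mul v E) = br u w v"
    using mul_anticommute[of F "mul v E"]
    by (simp add: mul_eq_br_F[OF u w] V_mul_E_mul_F[OF v] flip: centroid_mul_left[OF centroid_uw])
  moreover have "mul (mul (mul u v) w) E = 0"
    using mul_anticommute[of F w]
    by (simp add: mul_eq_br_F[OF u v] V_mul_F[OF w] mul_bilinear
        module_hom.zero[OF centroid_module_hom[OF centroid_uv]] flip: centroid_mul_left[OF centroid_uv])
  moreover have "mul (mul (mul v w) E) u = scale (1/2) (br v w u)"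
    by (simp add: mul_eq_br_F[OF v w] mul_F_E mul_H[OF u] mul_bilinear
        module_hom.scale[OF centroid_module_hom[OF centroid_vw]] flip: centroid_mul_left[OF centroid_vw])
  moreover have "mul (mul (mul w E) u) v = scale (1/2) (br u w v)"
    using mul_anticommute[of "mul w E" u]
    by (simp add: mul_mul_E_eq_br_H[OF u w] mul_H[OF v] mul_bilinear
        module_hom.neg[OF centroid_module_hom[OF centroid_uw]] flip: centroid_mul_left[OF centroid_uw])
  moreover have "mul (mul (mul E u) v) w = scale (1/2) (br u v w)"
    using mul_anticommute[of E u]
    by (simp add: mul_E_mul_eq_br_H[OF u v] mul_H[OF w] mul_bilinear
        module_hom.neg[OF centroid_module_hom[OF centroid_uv]] flip: centroid_mul_left[OF centroid_uv])
  ultimately have "br u w v = scale (1/2) (br v w u + br u w v + br u v w)"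
    using malcev_identity[of u w v E] by (simp add: scale_right_distrib)
  then have "scale 2 (br u w v) = br v w u + br u w v + br u v w"
    by (metis scale_two_half)
  then have "br u w v = br u v w + br v w u"
    by (simp add: scale_left_distrib[of 1 1, simplified] algebra_simps)
  with br_skew[OF u w, of v] show ?thesis
    by (metis add.commute neg_eq_iff_add_eq_0)
qed

lemma br_jacobi:
  assumes faithful: "\<And>m. m \<noteq> 0 \<Longrightarrow> \<exists>a\<in>span {E, H, F}. mul m a \<noteq> 0"
    and u: "u \<in> V" and v: "v \<in> V" and w: "w \<in> V" and t: "t \<in> V"
  shows "br u v (br w t x) + br v w (br u t x) + br w u (br v t x) = 0"
proof -
  let ?\<beta> = "\<lambda>x. br u v (br w t x) + br v w (br u t x) + br w u (br v t x)"
  have "?\<beta> \<in> centroid scale mul"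
    by (intro centroid_add centroid_comp[OF br_centroid br_centroid] u v w t)
  moreover have "?\<beta> F = mul (br u v w + br v w u + br w u v) t"
    by (simp add: mul_eq_br_F[symmetric] t u v w mul_bilinear centroid_mul_left[OF br_centroid] u v w)
  then have "?\<beta> F = 0"
    by (simp add: br_cyclic[OF u v w] mul_bilinear)
  ultimately show ?thesis
    using centroid_eq_0_if_vanishes_at_F[OF faithful] by blast
qed

end

theorem mainTheorem7:
  fixes scale :: "'k::field \<Rightarrow> 'm::ab_group_add \<Rightarrow> 'm"
    and mul :: "'m \<Rightarrow> 'm \<Rightarrow> 'm"
    and E H F :: 'm
    and br :: "'m \<Rightarrow> 'm \<Rightarrow> ('m \<Rightarrow> 'm)"
  assumes char2: "(2::'k) \<noteq> 0" and char3: "(3::'k) \<noteq> 0"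
    and inH: "in_H scale mul"
    and EH: "mul E H = E" and FH: "mul F H = - F" and EF: "mul E F = scale (1/2) H"
    and indep: "\<not> module.dependent scale {E, H, F}" and dist: "card {E, H, F} = 3"
    and faithful: "\<forall>m. m \<noteq> 0 \<longrightarrow> (\<exists>a\<in>module.span scale {E, H, F}. mul m a \<noteq> 0)"
    and br_U: "\<forall>u\<in>Vset scale mul (module.span scale {E, H, F}) H.
                \<forall>v\<in>Vset scale mul (module.span scale {E, H, F}) H.
                  br u v \<in> Uspan scale mul (module.span scale {E, H, F})"
    and br_skew: "\<forall>u\<in>Vset scale mul (module.span scale {E, H, F}) H.
                \<forall>v\<in>Vset scale mul (module.span scale {E, H, F}) H.
                  br u v = (\<lambda>x. - br v u x)"
    and br_lin: "\<forall>u\<in>Vset scale mul (module.span scale {E, H, F}) H.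
                \<forall>u'\<in>Vset scale mul (module.span scale {E, H, F}) H.
                \<forall>v\<in>Vset scale mul (module.span scale {E, H, F}) H. \<forall>c.
                  br (scale c u + u') v = (\<lambda>x. scale c (br u v x) + br u' v x)"
    and br_11: "\<forall>u\<in>Vset scale mul (module.span scale {E, H, F}) H.
                \<forall>v\<in>Vset scale mul (module.span scale {E, H, F}) H.
                  mul u v = br u v F"
    and br_12: "\<forall>u\<in>Vset scale mul (module.span scale {E, H, F}) H.
                \<forall>v\<in>Vset scale mul (module.span scale {E, H, F}) H.
                  mul u (mul v E) = scale (1/2) (br u v H) \<and>
                  mul (mul u E) v = scale (1/2) (br u v H)"
    and br_22: "\<forall>u\<in>Vset scale mul (module.span scale {E, H, F}) H.
                \<forall>v\<in>Vset scale mul (module.span scale {E, H, F}) H.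
                  mul (mul u E) (mul v E) = br u v E"
  shows "\<forall>u\<in>Vset scale mul (module.span scale {E, H, F}) H.
         \<forall>v\<in>Vset scale mul (module.span scale {E, H, F}) H.
         \<forall>w\<in>Vset scale mul (module.span scale {E, H, F}) H.
         \<forall>t\<in>Vset scale mul (module.span scale {E, H, F}) H.
           br u v w + br v w u + br w u v = 0 \<and>
           (\<forall>x. br u v (br w t x) + br v w (br u t x) + br w u (br v t x) = 0)"
proof -
  let ?V = "sl2_V scale mul E H F"
  have malcev: "malcev scale mul" and h: "\<And>y z t x u. hpoly scale mul y z t x u = 0"
    using inH unfolding in_H_def by blast+
  interpret M: malcev_H scale mul
    by (intro malcev_H.intro malcev_algebra.intro malcev_H_axioms.intro malcev h)
  interpret B: malcev_sl2_bracket scale mul E H F br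
  proof (unfold_locales)
    show "br u v \<in> centroid scale mul" if "u \<in> ?V" "v \<in> ?V" for u v
      using br_U M.Uspan_subset_centroid that by blast
    show "br u v x = - br v u x" if "u \<in> ?V" "v \<in> ?V" for u v x
      using br_skew that by metis
  qed (use EH FH EF char2 char3 br_11 br_12 in auto)
  show ?thesis
    using B.br_cyclic B.br_jacobi faithful by blast
qed

end
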